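(* For every integer $n\ge 2$, $$\operatorname{op}_{[2,\underbrace{1,\dots,1}_{n-2}]}(123) = \frac{3(n-1)\binom{2n-2}{n-1}}{n(n+1)}.$$
   Context: An ordered set partition of $[N]$ into $k$ blocks is a sequence $B_1/B_2/\cdots/B_k$ of nonempty, pairwise disjoint subsets of $[N]$ whose union is $[N]$; the order of the blocks matters, but not the order of elements within a block. For a permutation $\rho=\rho_1\cdots\rho_m\in\mathcal{S}_m$, an ordered partition $B_1/\cdots/B_k$ contains $\rho$ if there are block indices $i_1<i_2<\cdots<i_m$ and elements $b_j\in B_{i_j}$ such that $b_1\cdots b_m$ is order-isomorphic to $\rho$; otherwise it avoids $\rho$. For positive integers $b_1,\dots,b_k$, $\operatorname{op}_{[b_1,\dots,b_k]}(\rho)$ is the number of $\rho$-avoiding ordered partitions $B_1/\cdots/B_k$ of $[b_1+\cdots+b_k]$ with $|B_i|=b_i$ for all $i$. Thus $\operatorname{op}_{[2,1,\dots,1]}(123)$ (with $n-2$ ones) counts $123$-avoiding ordered partitions of $[n]$ whose first block has size $2$ and all other $n-2$ blocks have size $1$. *)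

theory Defs
  imports Complex_Main
begin

definition ordered_set_partition :: "nat set \<Rightarrow> nat set list \<Rightarrow> bool" where
  "ordered_set_partition S Bs \<longleftrightarrow>
     (\<forall>i < length Bs. Bs ! i \<noteq> {}) \<and>
     (\<forall>i < length Bs. \<forall>j < length Bs. i \<noteq> j \<longrightarrow> Bs ! i \<inter> Bs ! j = {}) \<and>
     \<Union>(set Bs) = S"

definition op_contains :: "nat set list \<Rightarrow> nat list \<Rightarrow> bool" where
  "op_contains Bs \<rho> \<longleftrightarrow>
     (\<exists>is bs. length is = length \<rho> \<and> length bs = length \<rho> \<and>
        sorted_wrt (<) is \<and>
        (\<forall>j < length \<rho>. is ! j < length Bs \<and> bs ! j \<in> Bs ! (is ! j)) \<and>
        (\<forall>j < length \<rho>. \<forall>j' < length \<rho>. bs ! j < bs ! j' \<longleftrightarrow> \<rho> ! j < \<rho> ! j'))"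

definition op_count :: "nat list \<Rightarrow> nat list \<Rightarrow> nat" where
  "op_count bsz \<rho> = card {Bs. ordered_set_partition {1..sum_list bsz} Bs \<and>
                             map card Bs = bsz \<and> \<not> op_contains Bs \<rho>}"

end

theory Submission
  imports Defs
begin

(* A partition of [n] with block sizes 2, 1, ..., 1 is {a, b}/{w_1}/.../{w_(n-2)} with a < b, and
   it avoids 123 iff the word w avoids 123 and has no rise w_i < w_j (i < j) with w_i > a.
   Reading such a word from the left, a first letter x <= t lowers the threshold t to x, while a
   first letter x > t must be the largest remaining letter.  Hence the number of admissible words
   on a k-element set depends only on k and on the number r of letters <= t, and it obeys the
   recurrence of Catalan's triangle C(k, r) = (k + 1 - r) / (k + 1) * binom(k + r, r).  As there
   are n - a choices for b, the count is sum_r (k + 1 - r) C(k, r) = C(k + 2, k) with k = n - 2. *)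

fun catalan_triangle :: "nat \<Rightarrow> nat \<Rightarrow> nat" where
  "catalan_triangle 0 r = 1"
| "catalan_triangle (Suc k) r =
     (\<Sum>i<r. catalan_triangle k i) + (if r \<le> k then catalan_triangle k r else 0)"

definition catalan_triangle_formula :: "nat \<Rightarrow> nat \<Rightarrow> real" where
  "catalan_triangle_formula k r = (real k + 1 - real r) * fact (k + r) / (fact (k + 1) * fact r)"

lemma catalan_triangle_formula_pascal:
  assumes "Suc r \<le> k"
  shows "catalan_triangle_formula (Suc k) r + catalan_triangle_formula k (Suc r) =
         catalan_triangle_formula (Suc k) (Suc r)"
proof -
  have "fact (Suc k + r) = (real k + real r + 1) * fact (k + r)"
       "fact (k + Suc r) = (real k + real r + 1) * fact (k + r)"
       "fact (Suc k + Suc r) = (real k + real r + 2) * (real k + real r + 1) * fact (k + r)"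
       "fact (Suc k + 1) = (real k + 2) * (real k + 1) * fact k"
       "fact (k + 1) = (real k + 1) * fact k"
       "fact (Suc r) = (real r + 1) * fact r"
    by (simp_all add: algebra_simps)
  moreover have "(fact k :: real) > 0" "(fact r :: real) > 0" "(fact (k + r) :: real) > 0" by auto
  ultimately show ?thesis
    unfolding catalan_triangle_formula_def by (simp add: divide_simps, simp add: algebra_simps)
qed

lemma sum_catalan_triangle_formula:
  "r \<le> k \<Longrightarrow> (\<Sum>i\<le>r. catalan_triangle_formula k i) = catalan_triangle_formula (Suc k) r"
proof (induction r)
  case 0
  have "(fact k :: real) > 0" by auto
  then show ?case by (simp add: catalan_triangle_formula_def divide_simps)
next
  case (Suc r)
  then show ?case by (simp add: catalan_triangle_formula_pascal)
qed

lemma catalan_triangle_formula_diagonal: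
  "catalan_triangle_formula (Suc k) k = catalan_triangle_formula (Suc k) (Suc k)"
proof -
  have cancel: "2 * x / (y * z) = 2 * (real k + 1) * x / (y * ((real k + 1) * z))" for x y z :: real
    using mult_divide_mult_cancel_left[of "real k + 1" "2 * x" "y * z"] by (simp add: ac_simps)
  have "fact (Suc k + Suc k) = 2 * (real k + 1) * fact (Suc k + k)"
       "fact (Suc k) = (real k + 1) * fact k"
    by (simp_all add: algebra_simps)
  then show ?thesis
    unfolding catalan_triangle_formula_def by (simp add: cancel, simp add: algebra_simps)
qed

lemma catalan_triangle_closed_form:
  "r \<le> k \<Longrightarrow> real (catalan_triangle k r) = catalan_triangle_formula k r"
proof (induction k arbitrary: r)
  case 0
  then show ?case by (simp add: catalan_triangle_formula_def)
next
  case (Suc k)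
  have partial_sum: "real (\<Sum>i<Suc r'. catalan_triangle k i) = catalan_triangle_formula (Suc k) r'"
    if "r' \<le> k" for r'
    using Suc.IH that sum_catalan_triangle_formula[OF that]
    by (simp add: of_nat_sum lessThan_Suc_atMost)
  show ?case
  proof (cases "r \<le> k")
    case True
    then show ?thesis using partial_sum by simp
  next
    case False
    then have "r = Suc k" using Suc.prems by simp
    then show ?thesis using partial_sum[of k] catalan_triangle_formula_diagonal by simp
  qed
qed

lemma sum_weighted_eq_sum_partial_sums:
  "(\<Sum>r\<le>m. (m + 1 - r) * f r) = (\<Sum>j\<le>m. \<Sum>r\<le>j. (f r :: nat))"
proof (induction m)
  case 0
  then show ?case by simp
next
  case (Suc m)
  have "(\<Sum>r\<le>Suc m. (Suc m + 1 - r) * f r) = (\<Sum>r\<le>Suc m. (m + 1 - r) * f r + f r)"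
    by (rule sum.cong) (auto simp: Suc_diff_le)
  then show ?case using Suc.IH by (simp add: sum.distrib)
qed

lemma catalan_triangle_weighted_row_sum:
  "(\<Sum>r\<le>k. (k + 1 - r) * catalan_triangle k r) = catalan_triangle (Suc (Suc k)) k"
proof -
  have "(\<Sum>r\<le>k. (k + 1 - r) * catalan_triangle k r) = (\<Sum>j\<le>k. \<Sum>r\<le>j. catalan_triangle k r)"
    by (rule sum_weighted_eq_sum_partial_sums)
  also have "\<dots> = (\<Sum>j\<le>k. catalan_triangle (Suc k) j)"
    by (rule sum.cong) (auto simp: lessThan_Suc_atMost[symmetric])
  also have "\<dots> = catalan_triangle (Suc (Suc k)) k"
    by (simp add: lessThan_Suc_atMost[symmetric])
  finally show ?thesis .
qed

lemma catalan_triangle_formula_subdiagonal: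
  assumes "n \<ge> 2"
  shows "catalan_triangle_formula n (n - 2) =
    3 * (real n - 1) * real ((2 * n - 2) choose (n - 1)) / (real n * (real n + 1))"
proof -
  obtain k where n: "n = Suc (Suc k)" using assms by (metis add_2_eq_Suc le_Suc_ex)
  have field_identity: "3 * x / ((real k + 3) * (real k + 2) * ((real k + 1) * f) * f) =
      3 * (real k + 1) * (x / (((real k + 1) * f) * ((real k + 1) * f))) / ((real k + 2) * (real k + 3))"
    if "f > 0" for x f :: real
    using that by (simp add: divide_simps)
  have binom: "real ((2 * k + 2) choose (k + 1)) = fact (2 * k + 2) / (fact (k + 1) * fact (k + 1))"
    using binomial_fact[of "k + 1" "2 * k + 2"] by simp
  have fact_succ: "fact (n + 1) = (real k + 3) * (real k + 2) * ((real k + 1) * fact k)"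
       "fact (k + 1) = (real k + 1) * fact k"
    by (simp_all add: n algebra_simps)
  have "n - 2 = k" "n + k = 2 * k + 2" "real n + 1 - real k = 3" by (simp_all add: n)
  then have "catalan_triangle_formula n (n - 2) =
      3 * fact (2 * k + 2) / ((real k + 3) * (real k + 2) * ((real k + 1) * fact k) * fact k)"
    unfolding catalan_triangle_formula_def fact_succ by (simp only:)
  also have "\<dots> = 3 * (real k + 1) * real ((2 * k + 2) choose (k + 1)) / ((real k + 2) * (real k + 3))"
    unfolding binom fact_succ by (rule field_identity) simp
  also have "\<dots> = 3 * (real n - 1) * real ((2 * n - 2) choose (n - 1)) / (real n * (real n + 1))"
  proof -
    have "real n - 1 = real k + 1" "2 * n - 2 = 2 * k + 2" "n - 1 = k + 1"
      "real n = real k + 2" "real n + 1 = real k + 3"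
      by (simp_all add: n)
    then show ?thesis by (simp only:)
  qed
  finally show ?thesis .
qed

definition has_rise_above :: "nat \<Rightarrow> nat list \<Rightarrow> bool" where
  "has_rise_above t w \<longleftrightarrow> (\<exists>i j. i < j \<and> j < length w \<and> t < w ! i \<and> w ! i < w ! j)"

definition has_123 :: "nat list \<Rightarrow> bool" where
  "has_123 w \<longleftrightarrow> (\<exists>i j k. i < j \<and> j < k \<and> k < length w \<and> w ! i < w ! j \<and> w ! j < w ! k)"

lemma has_rise_above_Cons:
  "has_rise_above t (x # w) \<longleftrightarrow> (t < x \<and> (\<exists>y\<in>set w. x < y)) \<or> has_rise_above t w"
proof
  assume "has_rise_above t (x # w)"
  then obtain i j where ij: "i < j" "j < Suc (length w)" "t < (x # w) ! i" "(x # w) ! i < (x # w) ! j"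
    unfolding has_rise_above_def by auto
  then obtain j' where "j = Suc j'" by (cases j) auto
  with ij show "(t < x \<and> (\<exists>y\<in>set w. x < y)) \<or> has_rise_above t w"
    unfolding has_rise_above_def by (cases i) auto
next
  assume "(t < x \<and> (\<exists>y\<in>set w. x < y)) \<or> has_rise_above t w"
  then show "has_rise_above t (x # w)"
  proof
    assume "t < x \<and> (\<exists>y\<in>set w. x < y)"
    then obtain j where "j < length w" "t < x" "x < w ! j" by (auto simp: in_set_conv_nth)
    then show ?thesis unfolding has_rise_above_def by (intro exI[of _ 0] exI[of _ "Suc j"]) auto
  next
    assume "has_rise_above t w"
    then obtain i j where "i < j" "j < length w" "t < w ! i" "w ! i < w ! j"
      unfolding has_rise_above_def by auto
    then show ?thesis unfolding has_rise_above_def by (intro exI[of _ "Suc i"] exI[of _ "Suc j"]) auto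
  qed
qed

lemma has_123_Cons: "has_123 (x # w) \<longleftrightarrow> has_rise_above x w \<or> has_123 w"
proof
  assume "has_123 (x # w)"
  then obtain i j k where ijk: "i < j" "j < k" "k < Suc (length w)"
      "(x # w) ! i < (x # w) ! j" "(x # w) ! j < (x # w) ! k"
    unfolding has_123_def by auto
  then obtain j' k' where "j = Suc j'" "k = Suc k'" by (cases j; cases k) auto
  with ijk show "has_rise_above x w \<or> has_123 w"
    unfolding has_rise_above_def has_123_def by (cases i) auto
next
  assume "has_rise_above x w \<or> has_123 w"
  then show "has_123 (x # w)"
  proof
    assume "has_rise_above x w"
    then obtain i j where "i < j" "j < length w" "x < w ! i" "w ! i < w ! j"
      unfolding has_rise_above_def by auto
    then show ?thesis unfolding has_123_def
      by (intro exI[of _ 0] exI[of _ "Suc i"] exI[of _ "Suc j"]) auto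
  next
    assume "has_123 w"
    then obtain i j k where "i < j" "j < k" "k < length w" "w ! i < w ! j" "w ! j < w ! k"
      unfolding has_123_def by auto
    then show ?thesis unfolding has_123_def
      by (intro exI[of _ "Suc i"] exI[of _ "Suc j"] exI[of _ "Suc k"]) auto
  qed
qed

lemma has_rise_above_antimono: "has_rise_above t w \<Longrightarrow> s \<le> t \<Longrightarrow> has_rise_above s w"
  unfolding has_rise_above_def by (meson le_less_trans)

definition avoiders :: "nat set \<Rightarrow> nat \<Rightarrow> nat list set" where
  "avoiders S t = {w. distinct w \<and> set w = S \<and> \<not> has_rise_above t w \<and> \<not> has_123 w}"

lemma finite_avoiders: "finite S \<Longrightarrow> finite (avoiders S t)"
  by (rule finite_subset[OF _ finite_subset_distinct]) (auto simp: avoiders_def)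

lemma Cons_mem_avoiders_iff:
  assumes "finite S"
  shows "x # w \<in> avoiders S t \<longleftrightarrow> x \<in> S \<and>
    (if x \<le> t then w \<in> avoiders (S - {x}) x else x = Max S \<and> w \<in> avoiders (S - {x}) t)"
proof -
  have set_Cons: "distinct (x # w) \<and> set (x # w) = S \<longleftrightarrow> x \<in> S \<and> distinct w \<and> set w = S - {x}"
    by auto
  show ?thesis
  proof (cases "x \<le> t")
    case True
    then have "\<not> has_rise_above t (x # w) \<and> \<not> has_123 (x # w) \<longleftrightarrow>
        \<not> has_rise_above x w \<and> \<not> has_123 w"
      using has_rise_above_antimono[of t w x] by (auto simp: has_rise_above_Cons has_123_Cons)
    with True show ?thesis
      unfolding avoiders_def mem_Collect_eq set_Cons by auto
  next
    case False
    have "\<not> has_rise_above x w" if "\<forall>y\<in>set w. y \<le> x"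
      using that unfolding has_rise_above_def by (meson leD less_trans nth_mem)
    with False have "\<not> has_rise_above t (x # w) \<and> \<not> has_123 (x # w) \<longleftrightarrow>
        (\<forall>y\<in>set w. y \<le> x) \<and> \<not> has_rise_above t w \<and> \<not> has_123 w"
      by (auto simp: has_rise_above_Cons has_123_Cons not_less)
    moreover have "(\<forall>y\<in>set w. y \<le> x) \<longleftrightarrow> x = Max S" if "x \<in> S" "set w = S - {x}"
    proof
      assume "\<forall>y\<in>set w. y \<le> x"
      then show "x = Max S"
        using that assms by (intro Max_eqI[symmetric]) auto
    qed (use that assms in simp)
    ultimately show ?thesis
      using False unfolding avoiders_def mem_Collect_eq set_Cons by auto
  qed
qed

lemma avoiders_decomp:
  assumes "finite S" "S \<noteq> {}"
  shows "avoiders S t = (\<Union>x\<in>{x\<in>S. x \<le> t}. (#) x ` avoiders (S - {x}) x) \<union>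
    (if t < Max S then (#) (Max S) ` avoiders (S - {Max S}) t else {})"
proof (intro set_eqI iffI)
  fix w assume "w \<in> avoiders S t"
  moreover from this obtain x w' where "w = x # w'"
    using assms(2) unfolding avoiders_def by (cases w) auto
  ultimately show "w \<in> (\<Union>x\<in>{x\<in>S. x \<le> t}. (#) x ` avoiders (S - {x}) x) \<union>
    (if t < Max S then (#) (Max S) ` avoiders (S - {Max S}) t else {})"
    using Cons_mem_avoiders_iff[OF assms(1)] by (auto split: if_splits)
next
  fix w assume "w \<in> (\<Union>x\<in>{x\<in>S. x \<le> t}. (#) x ` avoiders (S - {x}) x) \<union>
    (if t < Max S then (#) (Max S) ` avoiders (S - {Max S}) t else {})"
  then show "w \<in> avoiders S t"
    using Cons_mem_avoiders_iff[OF assms(1)] Max_in[OF assms] by (auto split: if_splits)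
qed

lemma card_avoiders_rec:
  assumes "finite S" "S \<noteq> {}"
  shows "card (avoiders S t) = (\<Sum>x\<in>{x\<in>S. x \<le> t}. card (avoiders (S - {x}) x)) +
    (if t < Max S then card (avoiders (S - {Max S}) t) else 0)"
proof -
  have fin: "finite (avoiders (S - {x}) s)" for x s
    using assms(1) by (simp add: finite_avoiders)
  have "card (\<Union>x\<in>{x\<in>S. x \<le> t}. (#) x ` avoiders (S - {x}) x) =
      (\<Sum>x\<in>{x\<in>S. x \<le> t}. card (avoiders (S - {x}) x))"
    using assms(1) fin by (subst card_UN_disjoint) (auto simp: card_image)
  moreover have "(\<Union>x\<in>{x\<in>S. x \<le> t}. (#) x ` avoiders (S - {x}) x) \<inter>
      (if t < Max S then (#) (Max S) ` avoiders (S - {Max S}) t else {}) = {}"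
    by auto
  ultimately show ?thesis
    unfolding avoiders_decomp[OF assms] using assms(1) fin
    by (subst card_Un_disjoint) (auto simp: card_image)
qed

lemma bij_betw_rank:
  fixes S :: "nat set"
  assumes "finite S"
  shows "bij_betw (\<lambda>x. card {s\<in>S. s < x}) {x\<in>S. x \<le> t} {..<card {s\<in>S. s \<le> t}}"
proof -
  let ?rank = "\<lambda>x. card {s\<in>S. s < x}"
  have rank_less: "?rank x < card A" if "finite A" "x \<in> A" "x \<in> S" "{s\<in>S. s < x} \<subseteq> A" for x A
    using that by (intro psubset_card_mono) auto
  have "strict_mono_on {x\<in>S. x \<le> t} ?rank"
    using assms by (intro strict_mono_onI rank_less) auto
  then have inj: "inj_on ?rank {x\<in>S. x \<le> t}"
    by (rule strict_mono_on_imp_inj_on)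
  moreover have sub: "?rank ` {x\<in>S. x \<le> t} \<subseteq> {..<card {s\<in>S. s \<le> t}}"
    using assms by (auto intro: rank_less)
  moreover have "card (?rank ` {x\<in>S. x \<le> t}) = card {..<card {s\<in>S. s \<le> t}}"
    using card_image[OF inj] by simp
  ultimately show ?thesis
    unfolding bij_betw_def by (simp add: card_subset_eq)
qed

theorem card_avoiders:
  "finite S \<Longrightarrow> card (avoiders S t) = catalan_triangle (card S) (card {s\<in>S. s \<le> t})"
proof (induction "card S" arbitrary: S t)
  case 0
  then have "avoiders S t = {[]}"
    unfolding avoiders_def by (auto simp: has_rise_above_def has_123_def)
  with 0 show ?case by simp
next
  case (Suc k)
  let ?r = "card {s\<in>S. s \<le> t}"
  have ne: "S \<noteq> {}" using Suc.hyps(2) by auto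
  have IH: "card (avoiders (S - {x}) s) = catalan_triangle k (card {y\<in>S - {x}. y \<le> s})"
    if "x \<in> S" for x s
  proof -
    have "k = card (S - {x})" using Suc that by simp
    with Suc.hyps(1) Suc.prems show ?thesis by (metis finite_Diff)
  qed
  have "(\<Sum>x\<in>{x\<in>S. x \<le> t}. card (avoiders (S - {x}) x)) =
      (\<Sum>x\<in>{x\<in>S. x \<le> t}. catalan_triangle k (card {s\<in>S. s < x}))"
  proof (rule sum.cong)
    fix x assume "x \<in> {x\<in>S. x \<le> t}"
    moreover have "{s\<in>S - {x}. s \<le> x} = {s\<in>S. s < x}" by auto
    ultimately show "card (avoiders (S - {x}) x) = catalan_triangle k (card {s\<in>S. s < x})"
      using IH by simp
  qed simp
  also have "\<dots> = (\<Sum>i<?r. catalan_triangle k i)"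
    by (rule sum.reindex_bij_betw[OF bij_betw_rank[OF Suc.prems]])
  finally have below: "(\<Sum>x\<in>{x\<in>S. x \<le> t}. card (avoiders (S - {x}) x)) =
      (\<Sum>i<?r. catalan_triangle k i)" .
  have above: "(if t < Max S then card (avoiders (S - {Max S}) t) else 0) =
      (if ?r \<le> k then catalan_triangle k ?r else 0)"
  proof (cases "t < Max S")
    case True
    have "Max S \<in> S" using Suc.prems ne by simp
    moreover have "Max S \<notin> {s\<in>S. s \<le> t}" using True by simp
    ultimately have "{s\<in>S. s \<le> t} \<subset> S" by blast
    then have "?r < card S" by (rule psubset_card_mono[OF Suc.prems])
    then have "?r \<le> k" using Suc.hyps(2) by simp
    moreover have "{s\<in>S - {Max S}. s \<le> t} = {s\<in>S. s \<le> t}" using True by auto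
    ultimately show ?thesis
      using True IH[OF \<open>Max S \<in> S\<close>] by simp
  next
    case False
    then have "s \<le> t" if "s \<in> S" for s
      using Max_ge[OF Suc.prems that] by simp
    then have "{s\<in>S. s \<le> t} = S" by blast
    then show ?thesis using False Suc.hyps(2) by simp
  qed
  show ?case
    using card_avoiders_rec[OF Suc.prems ne, of t] below above Suc.hyps(2)[symmetric] by simp
qed

lemma op_contains_123_iff:
  "op_contains Bs [1, 2, 3] \<longleftrightarrow> (\<exists>i j k a b c. i < j \<and> j < k \<and> k < length Bs \<and>
      a \<in> Bs ! i \<and> b \<in> Bs ! j \<and> c \<in> Bs ! k \<and> a < b \<and> b < c)"
proof
  have "length [1, 2, 3::nat] = 3" by simp
  moreover assume "op_contains Bs [1, 2, 3]"
  ultimately obtain "is" bs where h: "length is = 3" "length bs = 3" "sorted_wrt (<) is"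
      "\<forall>j<3. is ! j < length Bs \<and> bs ! j \<in> Bs ! (is ! j)"
      "\<forall>j<3. \<forall>j'<3. bs ! j < bs ! j' \<longleftrightarrow> [1, 2, 3::nat] ! j < [1, 2, 3] ! j'"
    unfolding op_contains_def by metis
  have "is ! 0 < is ! 1" "is ! 1 < is ! 2" using h(1,3) by (auto simp: sorted_wrt_iff_nth_less)
  moreover have "bs ! 0 < bs ! 1" "bs ! 1 < bs ! 2"
    using h(5) by (auto dest: spec[of _ 0] spec[of _ 1] spec[of _ 2])
  moreover have "is ! 2 < length Bs" "bs ! 0 \<in> Bs ! (is ! 0)" "bs ! 1 \<in> Bs ! (is ! 1)"
      "bs ! 2 \<in> Bs ! (is ! 2)"
    using h(4) by auto
  ultimately show "\<exists>i j k a b c. i < j \<and> j < k \<and> k < length Bs \<and>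
      a \<in> Bs ! i \<and> b \<in> Bs ! j \<and> c \<in> Bs ! k \<and> a < b \<and> b < c"
    by blast
next
  assume "\<exists>i j k a b c. i < j \<and> j < k \<and> k < length Bs \<and>
      a \<in> Bs ! i \<and> b \<in> Bs ! j \<and> c \<in> Bs ! k \<and> a < b \<and> b < c"
  then obtain i j k a b c where "i < j" "j < k" "k < length Bs"
      "a \<in> Bs ! i" "b \<in> Bs ! j" "c \<in> Bs ! k" "a < b" "b < c"
    by blast
  moreover have "(\<forall>j<Suc (Suc (Suc 0)). P j) \<longleftrightarrow> P 0 \<and> P (Suc 0) \<and> P (Suc (Suc 0))" for P
    by (auto simp: less_Suc_eq)
  ultimately show "op_contains Bs [1, 2, 3]"
    unfolding op_contains_def
    by (intro exI[of _ "[i, j, k]"] exI[of _ "[a, b, c]"]) (simp del: All_less_Suc)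
qed

lemma op_contains_123_block_singletons_iff:
  "op_contains (P # map (\<lambda>x. {x}) w) [1, 2, 3] \<longleftrightarrow> (\<exists>a\<in>P. has_rise_above a w) \<or> has_123 w"
  (is "op_contains ?Bs _ \<longleftrightarrow> _")
proof
  assume "op_contains ?Bs [1, 2, 3]"
  then obtain i j k a b c where h: "i < j" "j < k" "k < Suc (length w)"
      "a \<in> ?Bs ! i" "b \<in> ?Bs ! j" "c \<in> ?Bs ! k" "a < b" "b < c"
    unfolding op_contains_123_iff by auto
  then obtain j' k' where jk: "j = Suc j'" "k = Suc k'" by (cases j; cases k) auto
  show "(\<exists>a\<in>P. has_rise_above a w) \<or> has_123 w"
  proof (cases i)
    case 0
    with h jk show ?thesis unfolding has_rise_above_def by auto
  next
    case (Suc i')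
    with h jk show ?thesis unfolding has_123_def by auto
  qed
next
  assume "(\<exists>a\<in>P. has_rise_above a w) \<or> has_123 w"
  then show "op_contains ?Bs [1, 2, 3]"
  proof
    assume "\<exists>a\<in>P. has_rise_above a w"
    then obtain a i j where "a \<in> P" "i < j" "j < length w" "a < w ! i" "w ! i < w ! j"
      unfolding has_rise_above_def by blast
    then show ?thesis unfolding op_contains_123_iff
      by (intro exI[of _ 0] exI[of _ "Suc i"] exI[of _ "Suc j"] exI[of _ a] exI[of _ "w ! i"] exI[of _ "w ! j"]) auto
  next
    assume "has_123 w"
    then obtain i j k where "i < j" "j < k" "k < length w" "w ! i < w ! j" "w ! j < w ! k"
      unfolding has_123_def by blast
    then show ?thesis unfolding op_contains_123_iff
      by (intro exI[of _ "Suc i"] exI[of _ "Suc j"] exI[of _ "Suc k"] exI[of _ "w ! i"]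
          exI[of _ "w ! j"] exI[of _ "w ! k"]) auto
  qed
qed

lemma ordered_set_partition_block_singletons_iff:
  "ordered_set_partition S (P # map (\<lambda>x. {x}) w) \<longleftrightarrow>
     P \<noteq> {} \<and> set w \<inter> P = {} \<and> distinct w \<and> P \<union> set w = S"
  (is "ordered_set_partition S ?Bs \<longleftrightarrow> _")
proof -
  have nonempty: "(\<forall>i < length ?Bs. ?Bs ! i \<noteq> {}) \<longleftrightarrow> P \<noteq> {}"
    by (auto simp: nth_Cons split: nat.splits)
  have disjoint: "(\<forall>i < length ?Bs. \<forall>j < length ?Bs. i \<noteq> j \<longrightarrow> ?Bs ! i \<inter> ?Bs ! j = {}) \<longleftrightarrow>
      set w \<inter> P = {} \<and> distinct w"
    by (auto simp: nth_Cons less_Suc_eq_0_disj disjoint_iff distinct_conv_nth in_set_conv_nth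
        split: nat.splits)
  show ?thesis
    unfolding ordered_set_partition_def nonempty disjoint by auto
qed

lemma map_card_eq_replicate_1_iff:
  "map card Rs = replicate m 1 \<longleftrightarrow> (\<exists>w. Rs = map (\<lambda>x. {x}) w \<and> length w = m)"
proof
  assume card_Rs: "map card Rs = replicate m 1"
  have "{the_elem R} = R" if "R \<in> set Rs" for R
  proof -
    have "card R = 1" using card_Rs that by (metis in_set_replicate list.set_map imageI)
    then show ?thesis by (metis card_1_singletonE the_elem_eq)
  qed
  then have "Rs = map (\<lambda>x. {x}) (map the_elem Rs)"
    by (simp add: map_idI comp_def)
  with card_Rs show "\<exists>w. Rs = map (\<lambda>x. {x}) w \<and> length w = m"
    by (metis length_map length_replicate)
qed (auto simp: comp_def map_replicate_const)

lemma avoiding_partitions_2_1_eq_image: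
  assumes "finite S" "card S = m + 2"
  shows "{Bs. ordered_set_partition S Bs \<and> map card Bs = 2 # replicate m 1 \<and> \<not> op_contains Bs [1, 2, 3]}
    = (\<lambda>(p, w). {fst p, snd p} # map (\<lambda>x. {x}) w) `
        (SIGMA p:{(a, b)\<in>S \<times> S. a < b}. avoiders (S - {fst p, snd p}) (fst p))"
proof (intro set_eqI iffI)
  fix Bs
  assume "Bs \<in> {Bs. ordered_set_partition S Bs \<and> map card Bs = 2 # replicate m 1 \<and>
      \<not> op_contains Bs [1, 2, 3]}"
  then have Bs: "ordered_set_partition S Bs" "map card Bs = 2 # replicate m 1"
      "\<not> op_contains Bs [1, 2, 3]"
    by auto
  then obtain P Rs where "Bs = P # Rs" "card P = 2" "map card Rs = replicate m 1"
    by (cases Bs) auto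
  then obtain w where Bs_eq: "Bs = P # map (\<lambda>x. {x}) w" and "card P = 2"
    unfolding map_card_eq_replicate_1_iff by blast
  then obtain a b where P: "P = {a, b}" "a < b"
    by (auto simp: card_2_iff) (metis insert_commute linorder_neqE_nat)
  have "P \<noteq> {}" "set w \<inter> P = {}" "distinct w" "P \<union> set w = S"
    using Bs(1) unfolding Bs_eq ordered_set_partition_block_singletons_iff by auto
  moreover have "\<not> has_rise_above a w" "\<not> has_123 w"
    using Bs(3) unfolding Bs_eq op_contains_123_block_singletons_iff P by auto
  ultimately have "((a, b), w) \<in> (SIGMA p:{(a, b)\<in>S \<times> S. a < b}. avoiders (S - {fst p, snd p}) (fst p))"
    using P(2) unfolding avoiders_def P by auto
  then show "Bs \<in> (\<lambda>(p, w). {fst p, snd p} # map (\<lambda>x. {x}) w) `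
      (SIGMA p:{(a, b)\<in>S \<times> S. a < b}. avoiders (S - {fst p, snd p}) (fst p))"
    unfolding Bs_eq P by (rule rev_image_eqI) simp
next
  fix Bs
  assume "Bs \<in> (\<lambda>(p, w). {fst p, snd p} # map (\<lambda>x. {x}) w) `
      (SIGMA p:{(a, b)\<in>S \<times> S. a < b}. avoiders (S - {fst p, snd p}) (fst p))"
  then obtain a b w where ab: "a \<in> S" "b \<in> S" "a < b" and w: "w \<in> avoiders (S - {a, b}) a"
      and Bs_eq: "Bs = {a, b} # map (\<lambda>x. {x}) w"
    by auto
  have w_props: "distinct w" "set w = S - {a, b}" "\<not> has_rise_above a w" "\<not> has_123 w"
    using w unfolding avoiders_def by auto
  have "ordered_set_partition S Bs"
    unfolding Bs_eq ordered_set_partition_block_singletons_iff using w_props(1,2) ab by auto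
  moreover have "length w = m"
    using distinct_card[OF w_props(1)] w_props(2) assms ab by (simp add: card_Diff_subset)
  then have "map card Bs = 2 # replicate m 1"
    unfolding Bs_eq using ab(3) by (simp add: comp_def map_replicate_const)
  moreover have "\<not> has_rise_above b w"
    using has_rise_above_antimono[of b w a] w_props(3) ab(3) by auto
  then have "\<not> op_contains Bs [1, 2, 3]"
    unfolding Bs_eq op_contains_123_block_singletons_iff using w_props(3,4) by simp
  ultimately show "Bs \<in> {Bs. ordered_set_partition S Bs \<and> map card Bs = 2 # replicate m 1 \<and>
      \<not> op_contains Bs [1, 2, 3]}"
    by simp
qed

lemma card_avoiding_partitions_2_1:
  assumes "finite S" "card S = m + 2"
  shows "card {Bs. ordered_set_partition S Bs \<and> map card Bs = 2 # replicate m 1 \<and>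
      \<not> op_contains Bs [1, 2, 3]} =
    (\<Sum>p\<in>{(a, b)\<in>S \<times> S. a < b}. catalan_triangle m (card {s\<in>S. s < fst p}))"
proof -
  let ?Pairs = "{(a, b)\<in>S \<times> S. a < b}"
  have "inj_on (\<lambda>(p, w). {fst p, snd p} # map (\<lambda>x. {x}) w)
      (SIGMA p:?Pairs. avoiders (S - {fst p, snd p}) (fst p))"
    by (auto intro!: inj_onI simp: doubleton_eq_iff inj_map_eq_map inj_def)
  moreover have "card (avoiders (S - {fst p, snd p}) (fst p)) = catalan_triangle m (card {s\<in>S. s < fst p})"
    if "p \<in> ?Pairs" for p
  proof -
    have "card (S - {fst p, snd p}) = m" "{s\<in>S - {fst p, snd p}. s \<le> fst p} = {s\<in>S. s < fst p}"
      using that assms by (auto simp: card_Diff_subset)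
    then show ?thesis using assms(1) by (simp add: card_avoiders)
  qed
  moreover have "finite ?Pairs" using assms(1) by (auto intro: finite_subset[of _ "S \<times> S"])
  ultimately show ?thesis
    unfolding avoiding_partitions_2_1_eq_image[OF assms]
    by (simp add: card_image card_SigmaI finite_avoiders assms(1))
qed

lemma sum_ordered_pairs_atLeastAtMost:
  "(\<Sum>p\<in>{(a, b)\<in>{1..n} \<times> {1..n}. a < b}. f (fst p)) = (\<Sum>a=1..n. (n - a) * (f a :: nat))"
proof -
  have "{(a, b)\<in>{1..n} \<times> {1..n}. a < b} = (SIGMA a:{1..n}. {a<..n})" by auto
  then have "(\<Sum>p\<in>{(a, b)\<in>{1..n} \<times> {1..n}. a < b}. f (fst p)) = (\<Sum>a=1..n. \<Sum>b\<in>{a<..n}. f a)"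
    using sum.Sigma[of "{1..n}" "\<lambda>a. {a<..n}" "\<lambda>a b. f a"] by (simp add: split_beta)
  then show ?thesis by simp
qed

lemma card_avoiding_partitions_2_1_atLeastAtMost:
  assumes "n \<ge> 2"
  shows "card {Bs. ordered_set_partition {1..n} Bs \<and> map card Bs = 2 # replicate (n - 2) 1 \<and>
      \<not> op_contains Bs [1, 2, 3]} = catalan_triangle n (n - 2)"
proof -
  obtain k where n: "n = Suc (Suc k)" using assms by (metis add_2_eq_Suc le_Suc_ex)
  then have k: "n - 2 = k" by simp
  have "card {Bs. ordered_set_partition {1..n} Bs \<and> map card Bs = 2 # replicate k 1 \<and>
      \<not> op_contains Bs [1, 2, 3]} =
      (\<Sum>p\<in>{(a, b)\<in>{1..n} \<times> {1..n}. a < b}. catalan_triangle k (card {s\<in>{1..n}. s < fst p}))"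
    by (rule card_avoiding_partitions_2_1) (simp_all add: n)
  also have "\<dots> = (\<Sum>a=1..n. (n - a) * catalan_triangle k (card {s\<in>{1..n}. s < a}))"
    by (rule sum_ordered_pairs_atLeastAtMost)
  also have "\<dots> = (\<Sum>a=1..n. (n - a) * catalan_triangle k (a - 1))"
  proof (rule sum.cong)
    fix a assume "a \<in> {1..n}"
    then have "{s\<in>{1..n}. s < a} = {1..<a}" by auto
    then show "(n - a) * catalan_triangle k (card {s\<in>{1..n}. s < a}) =
        (n - a) * catalan_triangle k (a - 1)"
      by simp
  qed simp
  also have "\<dots> = (\<Sum>r\<le>k. (k + 1 - r) * catalan_triangle k r)"
    by (simp add: n sum.atLeast1_atMost_eq lessThan_Suc_atMost[symmetric])
  also have "\<dots> = catalan_triangle n k"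
    unfolding n by (rule catalan_triangle_weighted_row_sum)
  finally show ?thesis unfolding k .
qed

theorem lemma2:
  fixes n :: nat
  assumes "n \<ge> 2"
  shows "real (op_count (2 # replicate (n - 2) 1) [1, 2, 3]) =
         3 * (real n - 1) * real ((2 * n - 2) choose (n - 1)) / (real n * (real n + 1))"
proof -
  have "sum_list (2 # replicate (n - 2) 1) = n" using assms by (simp add: sum_list_replicate)
  then have "op_count (2 # replicate (n - 2) 1) [1, 2, 3] =
      card {Bs. ordered_set_partition {1..n} Bs \<and> map card Bs = 2 # replicate (n - 2) 1 \<and>
        \<not> op_contains Bs [1, 2, 3]}"
    by (simp only: op_count_def)
  also have "\<dots> = catalan_triangle n (n - 2)"
    using assms by (rule card_avoiding_partitions_2_1_atLeastAtMost)
  finally have "real (op_count (2 # replicate (n - 2) 1) [1, 2, 3]) = catalan_triangle_formula n (n - 2)"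
    by (simp add: catalan_triangle_closed_form)
  with assms show ?thesis by (simp add: catalan_triangle_formula_subdiagonal)
qed

end
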